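(* Let $X$ and $Y$ be chains with $X$ bounded, let $F\colon X^*\to Y$ be a standard function, and let $a,b\in X$ with $a\leqslant b$. The following are equivalent. (i) (a) $F$ is preassociative and unarily quasi-range-idempotent; (b) there is a strictly increasing function $f\colon[a,b]\to Y$ with convex range such that $F_1(x)=f(\mathrm{med}(a,x,b))$ for all $x\in X$; (c) $F_2(x,x)=F_1(x)$ for every $x\in X$; (d) $F_2$ is nondecreasing in each argument; (e) the sets $\{F_2(x,z):x\in X\}$ and $\{F_2(z,x):x\in X\}$ are convex for every $z\in X$. (ii) (a) $F$ is preassociative and unarily quasi-range-idempotent; (b) there is a strictly increasing function $f\colon[a,b]\to Y$ with convex range such that $F_1(x)=f(\mathrm{med}(a,x,b))$ for all $x\in X$; (c) for every integer $n\geqslant 2$, $F_n(x,\ldots,x)=F_1(x)$ for every $x\in X$; (d) for every integer $n\geqslant 2$, $F_n$ is nondecreasing in each argument; (e) for every integer $n\geqslant 2$, every $0\leqslant i\leqslant n-1$, every $\mathbf{y}\in X^i$ and $\mathbf{z}\in X^{n-1-i}$, the set $\{F_n(\mathbf{y},x,\mathbf{z}):x\in X\}$ is convex. (iii) There exist $c,d\in[a,b]$ and a strictly increasing function $f\colon[a,b]\to Y$ with convex range such that for every $n\geqslant 1$, $$F_n(x_1,\ldots,x_n)=f\Big(\mathrm{med}\Big(a,\,(c\wedge x_1)\vee\mathrm{med}\Big(\bigwedge_{i=1}^n x_i,\,c\wedge d,\,\bigvee_{i=1}^n x_i\Big)\vee(d\wedge x_n),\,b\Big)\Big).$$ In this case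 $f=F_1|_{[a,b]}$.
   Context: $X^*=\bigcup_{n\geqslant 0}X^n$ is the set of finite tuples over $X$, $X^0=\{\varepsilon\}$ with $\varepsilon$ the empty tuple; $F(\mathbf{x},\mathbf{y})$ denotes $F$ applied to the concatenation, concatenation with $\varepsilon$ leaving tuples unchanged. $F_n=F|_{X^n}$, $F^{\flat}=F|_{X^*\setminus\{\varepsilon\}}$. $F$ is standard if $F(\mathbf{x})=F(\varepsilon)$ only for $\mathbf{x}=\varepsilon$. $F$ is preassociative if for all tuples $\mathbf{x},\mathbf{y},\mathbf{y}',\mathbf{z}$, $F(\mathbf{y})=F(\mathbf{y}')$ implies $F(\mathbf{x},\mathbf{y},\mathbf{z})=F(\mathbf{x},\mathbf{y}',\mathbf{z})$. $F$ is unarily quasi-range-idempotent if $\mathrm{ran}(F_1)=\mathrm{ran}(F^{\flat})$. In the chain $X$, $\wedge,\vee$ denote min and max, $[a,b]=\{x\in X: a\leqslant x\leqslant b\}$, and $\mathrm{med}(x,y,z)=(x\vee y)\wedge(y\vee z)\wedge(z\vee x)$. A subset $S$ of a chain is convex if $s,s'\in S$ and $s<t<s'$ imply $t\in S$. *)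

theory Defs
  imports Main
begin

text \<open>Tuples over X are lists; the empty tuple is []. F_n is F restricted to lists of length n.\<close>

definition med :: "'a::linorder \<Rightarrow> 'a \<Rightarrow> 'a \<Rightarrow> 'a" where
  "med x y z = min (min (max x y) (max y z)) (max z x)"

definition convex_chain :: "'a::linorder set \<Rightarrow> bool" where
  "convex_chain S \<longleftrightarrow> (\<forall>s\<in>S. \<forall>s'\<in>S. \<forall>t. s < t \<and> t < s' \<longrightarrow> t \<in> S)"

definition standard :: "('a list \<Rightarrow> 'b) \<Rightarrow> bool" where
  "standard F \<longleftrightarrow> (\<forall>xs. F xs = F [] \<longrightarrow> xs = [])"

definition preassociative :: "('a list \<Rightarrow> 'b) \<Rightarrow> bool" where
  "preassociative F \<longleftrightarrow>
     (\<forall>x y y' z. F y = F y' \<longrightarrow> F (x @ y @ z) = F (x @ y' @ z))"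

definition unarily_quasi_range_idempotent :: "('a list \<Rightarrow> 'b) \<Rightarrow> bool" where
  "unarily_quasi_range_idempotent F \<longleftrightarrow>
     range (\<lambda>x. F [x]) = F ` {xs. xs \<noteq> []}"

end

theory Submission
  imports Defs
begin

text \<open>
Preassociativity and unary quasi-range-idempotence let us write \<open>F\<^sub>2(x, y) = f(G(x, y))\<close>
for a binary operation \<open>G\<close> on \<open>[a, b]\<close>, and the binary conditions make \<open>G\<close> associative,
idempotent and monotone, with convex sections. Every section \<open>h\<close> of such a \<open>G\<close> is then a
monotone retraction of \<open>[a, b]\<close> with convex range, hence the clamp
\<open>p \<mapsto> med(h(a), p, h(b))\<close>; this forces \<open>G(z, y) = med(z \<and> c, y, z \<or> d)\<close> with
\<open>c = G(b, a)\<close> and \<open>d = G(a, b)\<close>. By preassociativity \<open>F\<^sub>n\<close> is \<open>f\<close> of the \<open>n\<close>-fold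
\<open>G\<close>-product, and this product is the displayed lattice polynomial. Conversely, for \<open>F\<close> of
that form \<open>F\<^sub>n\<close> is \<open>f\<close> of an associative product, so \<open>F\<close> is preassociative, and every
section \<open>x \<mapsto> F\<^sub>n(y, x, z)\<close> is \<open>f\<close> composed with clamps, hence monotone with convex range.
\<close>

text \<open>Identities between min/max terms over a chain reduce, via this, to propositional
  tautologies over atoms \<open>t \<le> _\<close>, which \<open>argo\<close> decides.\<close>
lemma eq_if_same_lower_bounds:
  fixes u v :: "'a::linorder"
  assumes "\<And>t. t \<le> u \<longleftrightarrow> t \<le> v"
  shows "u = v"
  using assms by (meson antisym order_refl)

lemma med_mem_atLeastAtMost: "(a::'a::linorder) \<le> b \<Longrightarrow> med a x b \<in> {a..b}"
  by (auto simp: med_def min_def max_def)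

lemma med_eq_self: "(p::'a::linorder) \<in> {a..b} \<Longrightarrow> med a p b = p"
  by (auto simp: med_def)

lemma convex_chainD:
  "convex_chain S \<Longrightarrow> s \<in> S \<Longrightarrow> s' \<in> S \<Longrightarrow> s \<le> t \<Longrightarrow> t \<le> s' \<Longrightarrow> t \<in> S"
  unfolding convex_chain_def by (metis order_le_less)

lemma convex_chain_image_strict_mono_on:
  fixes f :: "'a::linorder \<Rightarrow> 'b::linorder"
  assumes f: "strict_mono_on {a..b} f" and conv: "convex_chain (f ` {a..b})"
    and S: "S \<subseteq> {a..b}" "convex_chain S"
  shows "convex_chain (f ` S)"
  unfolding convex_chain_def
proof (intro ballI allI impI)
  fix s s' t assume "s \<in> f ` S" "s' \<in> f ` S" and t: "s < t \<and> t < s'"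
  then obtain u u' where u: "u \<in> S" "u' \<in> S" "s = f u" "s' = f u'" by auto
  then have "t \<in> f ` {a..b}"
    using convex_chainD[OF conv, of s s' t] S(1) t by (auto simp: less_imp_le)
  then obtain w where w: "w \<in> {a..b}" "t = f w" by auto
  have "u < w" "w < u'"
    using t u w S(1) strict_mono_on_less[OF f] by auto
  then show "t \<in> f ` S" using convex_chainD[OF S(2) u(1,2)] w by (auto simp: less_imp_le)
qed

lemma convex_chain_if_image_strict_mono_on:
  fixes f :: "'a::linorder \<Rightarrow> 'b::linorder"
  assumes f: "strict_mono_on {a..b} f" and S: "S \<subseteq> {a..b}" and conv: "convex_chain (f ` S)"
  shows "convex_chain S"
  unfolding convex_chain_def
proof (intro ballI allI impI)
  fix s s' t assume s: "s \<in> S" "s' \<in> S" and t: "s < t \<and> t < s'"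
  then have t_ab: "t \<in> {a..b}"
    using S by (meson atLeastAtMost_iff less_imp_le order_trans subsetD)
  then have "f s \<le> f t" "f t \<le> f s'"
    using s t S strict_mono_on_less_eq[OF f] by (auto simp: less_imp_le)
  then obtain u where "u \<in> S" "f t = f u" using convex_chainD[OF conv] s by blast
  then show "t \<in> S" using strict_mono_on_eq[OF f] t_ab S by auto
qed

definition is_clamp :: "('a::linorder \<Rightarrow> 'a) \<Rightarrow> bool" where
  "is_clamp g \<longleftrightarrow> (\<exists>l u. \<forall>x. g x = max l (min x u))"

lemma med_eq_clamp: "(l::'a::linorder) \<le> u \<Longrightarrow> med l x u = max l (min x u)"
  by (auto simp: med_def min_def max_def)

lemma is_clamp_comp: assumes "is_clamp g" "is_clamp h" shows "is_clamp (\<lambda>x. g (h x))"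
proof -
  obtain l u where g: "\<And>x. g x = max l (min x u)" using assms(1) unfolding is_clamp_def by blast
  obtain l' u' where h: "\<And>x. h x = max l' (min x u')" using assms(2) unfolding is_clamp_def by blast
  have "\<forall>x. g (h x) = max (max l (min l' u)) (min x (min u' u))"
    unfolding g h
    by (intro allI, rule eq_if_same_lower_bounds) (simp only: le_max_iff_disj min.bounded_iff, argo)
  then show ?thesis unfolding is_clamp_def by blast
qed

lemma is_clamp_med: "(a::'a::linorder) \<le> b \<Longrightarrow> is_clamp (\<lambda>x. med a x b)"
  unfolding is_clamp_def using med_eq_clamp by blast

lemma convex_chain_range_is_clamp: assumes "is_clamp g" shows "convex_chain (range g)"
proof -
  obtain l u where g: "\<And>x. g x = max l (min x u)" using assms unfolding is_clamp_def by blast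
  show ?thesis unfolding convex_chain_def
  proof (intro ballI allI impI)
    fix s s' t assume "s \<in> range g" "s' \<in> range g" and t: "s < t \<and> t < s'"
    then have "l < t" "t < u" using g by (auto simp: less_max_iff_disj)
    then have "g t = t" using g[of t] by simp
    then show "t \<in> range g" by (metis rangeI)
  qed
qed

lemma is_clamp_mono: assumes "is_clamp g" shows "mono g"
proof -
  obtain l u where "\<And>x. g x = max l (min x u)" using assms unfolding is_clamp_def by blast
  then show ?thesis by (metis max.mono min.mono monoI order_refl)
qed

definition med_op :: "'a::linorder \<Rightarrow> 'a \<Rightarrow> 'a \<Rightarrow> 'a \<Rightarrow> 'a" where
  "med_op c d p q = med (min p c) q (max p d)"

lemma med_op_eq_max_min: "med_op c d p q = max (min p c) (min q (max (p::'a::linorder) d))"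
proof -
  have "min p c \<le> max p d" by (meson le_max_iff_disj min.cobounded1)
  then show ?thesis unfolding med_op_def by (rule med_eq_clamp)
qed

lemma med_op_assoc: "med_op c d (med_op c d p q) r = med_op c d p (med_op c d q r)"
  unfolding med_op_eq_max_min
  by (rule eq_if_same_lower_bounds) (simp only: le_max_iff_disj min.bounded_iff, argo)

lemma is_clamp_med_op_left: "is_clamp (\<lambda>p. med_op c d p (q::'a::linorder))"
proof -
  have "\<forall>p. med_op c d p q = max (min q d) (min p (max c q))"
    unfolding med_op_eq_max_min
    by (intro allI, rule eq_if_same_lower_bounds)
      (simp only: le_max_iff_disj min.bounded_iff, argo)
  then show ?thesis unfolding is_clamp_def by blast
qed

lemma is_clamp_med_op_right: "is_clamp (med_op c d (p::'a::linorder))"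
  unfolding is_clamp_def med_op_eq_max_min by blast

definition med_poly :: "'a::linorder \<Rightarrow> 'a \<Rightarrow> 'a \<Rightarrow> 'a \<Rightarrow> 'a list \<Rightarrow> 'a" where
  "med_poly a b c d xs = med a (max (max (min c (hd xs))
                                         (med (Min (set xs)) (min c d) (Max (set xs))))
                                    (min d (last xs))) b"

lemma med_poly_mem: "a \<le> b \<Longrightarrow> med_poly a b c d xs \<in> {a..b}"
  unfolding med_poly_def by (rule med_mem_atLeastAtMost)

lemma med_poly_singleton: "med_poly a b c d [x] = med a x b"
  unfolding med_poly_def
  by (rule arg_cong[where f="\<lambda>z. med a z b"], rule eq_if_same_lower_bounds)
    (simp only: list.sel last.simps if_True set_simps Min_singleton Max_singleton med_def
      le_max_iff_disj min.bounded_iff, argo)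

lemma med_poly_replicate: "n \<noteq> 0 \<Longrightarrow> med_poly a b c d (replicate n x) = med a x b"
  using med_poly_singleton[of a b c d x] by (simp add: med_poly_def)

lemma med_poly_snoc:
  assumes "xs \<noteq> []" and cd: "c \<in> {a..b}" "d \<in> {a..b}"
  shows "med_poly a b c d (xs @ [y]) = med_op c d (med_poly a b c d xs) (med a y b)"
proof -
  have lattice_identity:
    "med a (max (max (min c h) (med (min y m) (min c d) (max y M))) (min d y)) b
       = med_op c d (med a (max (max (min c h) (med m (min c d) M)) (min d l)) b) (med a y b)"
    if "m \<le> h" "h \<le> M" "m \<le> l" "l \<le> M" for h m M l
  proof (rule eq_if_same_lower_bounds)
    fix t
    have "t \<le> m \<Longrightarrow> t \<le> h" "t \<le> h \<Longrightarrow> t \<le> M" "t \<le> m \<Longrightarrow> t \<le> l" "t \<le> l \<Longrightarrow> t \<le> M"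
      "t \<le> a \<Longrightarrow> t \<le> c" "t \<le> c \<Longrightarrow> t \<le> b" "t \<le> a \<Longrightarrow> t \<le> d" "t \<le> d \<Longrightarrow> t \<le> b"
      using that cd order_trans by auto
    then show "t \<le> med a (max (max (min c h) (med (min y m) (min c d) (max y M))) (min d y)) b
       \<longleftrightarrow> t \<le> med_op c d (med a (max (max (min c h) (med m (min c d) M)) (min d l)) b) (med a y b)"
      unfolding med_op_eq_max_min med_def by (simp only: le_max_iff_disj min.bounded_iff) argo
  qed
  have fin: "finite (set xs)" "set xs \<noteq> {}" using assms(1) by auto
  then have "Min (set xs) \<le> hd xs" "hd xs \<le> Max (set xs)"
    "Min (set xs) \<le> last xs" "last xs \<le> Max (set xs)"
    using assms(1) by auto
  then show ?thesis
    unfolding med_poly_def using assms(1) fin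
    by (simp add: lattice_identity)
qed

lemma med_poly_append:
  assumes "xs \<noteq> []" "ys \<noteq> []" and cd: "c \<in> {a..b}" "d \<in> {a..b}"
  shows "med_poly a b c d (xs @ ys) = med_op c d (med_poly a b c d xs) (med_poly a b c d ys)"
  using assms(2)
proof (induction ys rule: rev_induct)
  case (snoc y zs)
  show ?case
  proof (cases "zs = []")
    case True
    then show ?thesis using med_poly_snoc[OF assms(1) cd] by (simp add: med_poly_singleton)
  next
    case False
    have "med_poly a b c d ((xs @ zs) @ [y])
        = med_op c d (med_op c d (med_poly a b c d xs) (med_poly a b c d zs)) (med a y b)"
      using med_poly_snoc[OF _ cd, of "xs @ zs"] snoc.IH False assms(1) by simp
    also have "\<dots> = med_op c d (med_poly a b c d xs) (med_poly a b c d (zs @ [y]))"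
      using med_poly_snoc[OF False cd] by (simp add: med_op_assoc)
    finally show ?thesis by simp
  qed
qed simp

lemma mono_retraction_eq_med:
  fixes h :: "'a::linorder \<Rightarrow> 'a"
  assumes maps: "\<And>x. x \<in> {a..b} \<Longrightarrow> h x \<in> {a..b}"
    and retraction: "\<And>x. x \<in> {a..b} \<Longrightarrow> h (h x) = h x"
    and mono: "mono_on {a..b} h" and conv: "convex_chain (h ` {a..b})"
    and p: "p \<in> {a..b}"
  shows "h p = med (h a) p (h b)"
proof -
  have ab: "a \<in> {a..b}" "b \<in> {a..b}" using p by auto
  have bounds: "h a \<le> h p" "h p \<le> h b" using mono p ab by (auto intro: mono_onD)
  consider "p < h a" | "h a \<le> p" "p \<le> h b" | "h b < p" by fastforce
  then show ?thesis
  proof cases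
    case 1
    then have "h p \<le> h (h a)" using mono p maps ab by (auto intro: mono_onD)
    then show ?thesis using 1 bounds retraction ab by (auto simp: med_def)
  next
    case 2
    then have "p \<in> h ` {a..b}" using convex_chainD[OF conv] ab by blast
    then have "h p = p" using retraction by auto
    then show ?thesis using 2 by (auto simp: med_def)
  next
    case 3
    then have "h (h b) \<le> h p" using mono p maps ab by (auto intro: mono_onD)
    then show ?thesis using 3 bounds retraction ab by (auto simp: med_def)
  qed
qed

lemma assoc_idem_mono_convex_eq_med_op:
  fixes G :: "'a::linorder \<Rightarrow> 'a \<Rightarrow> 'a"
  assumes closed: "\<And>x y. x \<in> {a..b} \<Longrightarrow> y \<in> {a..b} \<Longrightarrow> G x y \<in> {a..b}"
    and assoc: "\<And>x y z. x \<in> {a..b} \<Longrightarrow> y \<in> {a..b} \<Longrightarrow> z \<in> {a..b} \<Longrightarrow>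
      G (G x y) z = G x (G y z)"
    and idem: "\<And>x. x \<in> {a..b} \<Longrightarrow> G x x = x"
    and mono_left: "\<And>z. z \<in> {a..b} \<Longrightarrow> mono_on {a..b} (\<lambda>x. G x z)"
    and mono_right: "\<And>z. z \<in> {a..b} \<Longrightarrow> mono_on {a..b} (G z)"
    and conv_left: "\<And>z. z \<in> {a..b} \<Longrightarrow> convex_chain ((\<lambda>x. G x z) ` {a..b})"
    and conv_right: "\<And>z. z \<in> {a..b} \<Longrightarrow> convex_chain (G z ` {a..b})"
    and z: "z \<in> {a..b}" and y: "y \<in> {a..b}"
  shows "G z y = med_op (G b a) (G a b) z y"
proof -
  have ab: "a \<in> {a..b}" "b \<in> {a..b}" using z by auto
  have left_section: "G p q = med (G a q) p (G b q)" if "p \<in> {a..b}" "q \<in> {a..b}" for p q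
    by (rule mono_retraction_eq_med[where h="\<lambda>x. G x q"])
      (use that closed assoc idem mono_left conv_left in auto)
  have right_section: "G z q = med (G z a) q (G z b)" if "q \<in> {a..b}" for q
    by (rule mono_retraction_eq_med[where h="G z"])
      (use that z closed assoc[symmetric] idem mono_right conv_right in auto)
  have "G z a = min z (G b a)" "G z b = max z (G a b)"
    using left_section[OF z ab(1)] left_section[OF z ab(2)] idem[OF ab(1)] idem[OF ab(2)]
      closed[OF ab(2,1)] closed[OF ab(1,2)] z
    by (auto simp: med_def min_def max_def)
  then show ?thesis using right_section[OF y] by (simp add: med_op_def)
qed

lemma is_clamp_med_poly_section:
  assumes ab: "a \<le> b" and cd: "c \<in> {a..b}" "d \<in> {a..b}"
  shows "is_clamp (\<lambda>x. med_poly a b c d (ys @ [x] @ zs))"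
proof -
  have cons: "med_poly a b c d (x # zs) = med_op c d (med a x b) (med_poly a b c d zs)"
    if "zs \<noteq> []" for x zs
    using med_poly_append[OF _ that cd, of "[x]"] by (simp add: med_poly_singleton)
  have app: "med_poly a b c d (ys @ x # zs)
      = med_op c d (med_poly a b c d ys) (med_poly a b c d (x # zs))" if "ys \<noteq> []" for x ys zs
    using med_poly_append[OF that _ cd] by simp
  have med: "is_clamp (\<lambda>x. med a x b)" by (rule is_clamp_med[OF ab])
  show ?thesis
  proof (cases "ys = []"; cases "zs = []")
    assume "ys = []" "zs = []"
    then show ?thesis using med by (simp add: med_poly_singleton)
  next
    assume "ys = []" "zs \<noteq> []"
    then show ?thesis using is_clamp_comp[OF is_clamp_med_op_left med] by (simp add: cons)
  next
    assume "ys \<noteq> []" "zs = []"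
    then show ?thesis using is_clamp_comp[OF is_clamp_med_op_right med]
      by (simp add: med_poly_snoc[OF _ cd])
  next
    assume "ys \<noteq> []" "zs \<noteq> []"
    then show ?thesis
      using is_clamp_comp[OF is_clamp_med_op_right is_clamp_comp[OF is_clamp_med_op_left med]]
      by (simp add: cons app)
  qed
qed

lemma preassociative_eq_f_med_poly:
  fixes F :: "'a::linorder list \<Rightarrow> 'b" and f :: "'a \<Rightarrow> 'b"
  assumes ab: "a \<le> b" and cd: "c \<in> {a..b}" "d \<in> {a..b}" and pa: "preassociative F"
    and F1: "\<And>x. F [x] = f (med a x b)"
    and F2: "\<And>p y. p \<in> {a..b} \<Longrightarrow> F [p, y] = f (med_op c d p (med a y b))"
    and xs: "xs \<noteq> []"
  shows "F xs = f (med_poly a b c d xs)"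
  using xs
proof (induction xs rule: rev_induct)
  case (snoc y xs)
  show ?case
  proof (cases "xs = []")
    case True
    then show ?thesis using F1 by (simp add: med_poly_singleton)
  next
    case False
    let ?p = "med_poly a b c d xs"
    have p: "?p \<in> {a..b}" by (rule med_poly_mem[OF ab])
    have "F xs = F [?p]" using snoc.IH False F1 med_eq_self[OF p] by simp
    then have "F ([] @ xs @ [y]) = F ([] @ [?p] @ [y])"
      using pa unfolding preassociative_def by blast
    then show ?thesis using F2[OF p] med_poly_snoc[OF False cd] by simp
  qed
qed simp

lemma binary_part_of_preassociative:
  fixes F :: "'a::linorder list \<Rightarrow> 'b::linorder" and f :: "'a \<Rightarrow> 'b"
  assumes ab: "a \<le> b" and pa: "preassociative F" and uq: "unarily_quasi_range_idempotent F"
    and f_mono: "strict_mono_on {a..b} f" and F1: "\<And>x. F [x] = f (med a x b)"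
  obtains G where "\<And>x y. G x y \<in> {a..b}" "\<And>x y. F [x, y] = f (G x y)"
    "\<And>x y z. G (G x y) z = G x (G y z)"
    "\<And>x y. G (med a x b) y = G x y" "\<And>x y. G x (med a y b) = G x y"
proof -
  have PA: "F y = F y' \<Longrightarrow> F (x @ y @ z) = F (x @ y' @ z)" for x y y' z
    using pa unfolding preassociative_def by blast
  have "\<exists>t\<in>{a..b}. F [x, y] = f t" for x y
  proof -
    have "F [x, y] \<in> range (\<lambda>x. F [x])"
      using uq unfolding unarily_quasi_range_idempotent_def by auto
    then show ?thesis using F1 med_mem_atLeastAtMost[OF ab] by auto
  qed
  then obtain G where G_mem: "\<And>x y. G x y \<in> {a..b}" and F2: "\<And>x y. F [x, y] = f (G x y)"
    by metis
  have G_eqI: "G x y = G x' y'" if "F [x, y] = F [x', y']" for x y x' y'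
    using that F2 strict_mono_on_eq[OF f_mono G_mem G_mem] by metis
  have F_G: "F [G x y] = F [x, y]" for x y using F1 F2 med_eq_self[OF G_mem] by simp
  have F_med: "F [med a x b] = F [x]" for x
    using F1 med_eq_self[OF med_mem_atLeastAtMost[OF ab]] by simp
  have "F [G x y, z] = F [x, G y z]" for x y z
    using PA[of "[G x y]" "[x, y]" "[]" "[z]"] PA[of "[y, z]" "[G y z]" "[x]" "[]"] F_G by simp
  moreover have "F [med a x b, y] = F [x, y]" "F [x, med a y b] = F [x, y]" for x y
    using PA[of "[med a x b]" "[x]" "[]" "[y]"] PA[of "[med a y b]" "[y]" "[x]" "[]"] F_med by simp_all
  ultimately show thesis using that G_mem F2 G_eqI by metis
qed

lemma convex_chain_image_if_convex_range_comp:
  fixes f :: "'a::linorder \<Rightarrow> 'b::linorder"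
  assumes f: "strict_mono_on {a..b} f" and ab: "a \<le> b"
    and g_mem: "\<And>x. g x \<in> {a..b}" and g_med: "\<And>x. g (med a x b) = g x"
    and conv: "convex_chain (range (\<lambda>x. f (g x)))"
  shows "convex_chain (g ` {a..b})"
proof (rule convex_chain_if_image_strict_mono_on[OF f])
  show "g ` {a..b} \<subseteq> {a..b}" using g_mem by auto
  have "range (\<lambda>x. f (g x)) = f ` g ` {a..b}"
  proof (intro equalityI subsetI)
    fix v assume "v \<in> range (\<lambda>x. f (g x))"
    then obtain x where "v = f (g (med a x b))" using g_med by auto
    then show "v \<in> f ` g ` {a..b}" using med_mem_atLeastAtMost[OF ab] by blast
  qed auto
  then show "convex_chain (f ` g ` {a..b})" using conv by simp
qed

lemma med_poly_form_if_binary_conditions: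
  fixes F :: "'a::linorder list \<Rightarrow> 'b::linorder" and f :: "'a \<Rightarrow> 'b"
  assumes ab: "a \<le> b" and pa: "preassociative F" and uq: "unarily_quasi_range_idempotent F"
    and f_mono: "strict_mono_on {a..b} f" and F1: "\<forall>x. F [x] = f (med a x b)"
    and idem: "\<forall>x. F [x, x] = F [x]"
    and mono_left: "\<forall>x x' y. x \<le> x' \<longrightarrow> F [x, y] \<le> F [x', y]"
    and mono_right: "\<forall>x y y'. y \<le> y' \<longrightarrow> F [x, y] \<le> F [x, y']"
    and conv: "\<forall>z. convex_chain {F [x, z] | x. True} \<and> convex_chain {F [z, x] | x. True}"
  shows "\<exists>c\<in>{a..b}. \<exists>d\<in>{a..b}. \<forall>xs. xs \<noteq> [] \<longrightarrow> F xs = f (med_poly a b c d xs)"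
proof -
  obtain G where G_mem: "\<And>x y. G x y \<in> {a..b}" and F2: "\<And>x y. F [x, y] = f (G x y)"
    and G_assoc: "\<And>x y z. G (G x y) z = G x (G y z)"
    and G_med_left: "\<And>x y. G (med a x b) y = G x y"
    and G_med_right: "\<And>x y. G x (med a y b) = G x y"
    using binary_part_of_preassociative[OF ab pa uq f_mono F1[rule_format]] by blast
  have G_le_iff: "f (G x y) \<le> f (G x' y') \<longleftrightarrow> G x y \<le> G x' y'" for x y x' y'
    using strict_mono_on_less_eq[OF f_mono G_mem G_mem] .
  have G_idem: "G p p = p" if "p \<in> {a..b}" for p
    using idem F1 F2 med_eq_self[OF that] strict_mono_on_eq[OF f_mono G_mem that] by metis
  have G_mono_left: "mono_on {a..b} (\<lambda>x. G x z)" for z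
    using mono_left F2 G_le_iff by (auto intro: mono_onI)
  have G_mono_right: "mono_on {a..b} (G z)" for z
    using mono_right F2 G_le_iff by (auto intro: mono_onI)
  have G_conv_left: "convex_chain ((\<lambda>x. G x z) ` {a..b})" for z
    using convex_chain_image_if_convex_range_comp[OF f_mono ab, where g="\<lambda>x. G x z",
        OF G_mem G_med_left] conv
    by (simp add: F2 full_SetCompr_eq)
  have G_conv_right: "convex_chain (G z ` {a..b})" for z
    using convex_chain_image_if_convex_range_comp[OF f_mono ab, where g="G z",
        OF G_mem G_med_right] conv
    by (simp add: F2 full_SetCompr_eq)
  define c where "c = G b a"
  define d where "d = G a b"
  have G_eq: "G p q = med_op c d p q" if "p \<in> {a..b}" "q \<in> {a..b}" for p q
    unfolding c_def d_def
    by (rule assoc_idem_mono_convex_eq_med_op[OF _ _ G_idem G_mono_left G_mono_right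
          G_conv_left G_conv_right that]) (use G_mem G_assoc in auto)
  have "F [p, y] = f (med_op c d p (med a y b))" if "p \<in> {a..b}" for p y
  proof -
    have "F [p, y] = f (G p (med a y b))" using F2 G_med_right by simp
    also have "\<dots> = f (med_op c d p (med a y b))"
      using G_eq[OF that med_mem_atLeastAtMost[OF ab]] by simp
    finally show ?thesis .
  qed
  then have "F xs = f (med_poly a b c d xs)" if "xs \<noteq> []" for xs
    using preassociative_eq_f_med_poly[OF ab _ _ pa] F1 G_mem c_def d_def that by blast
  then show ?thesis using G_mem c_def d_def by blast
qed

context
  fixes F :: "'a::linorder list \<Rightarrow> 'b::linorder" and f :: "'a \<Rightarrow> 'b" and a b c d :: 'a
  assumes ab: "a \<le> b" and cd: "c \<in> {a..b}" "d \<in> {a..b}"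
    and f_mono: "strict_mono_on {a..b} f"
    and F_eq: "\<And>xs. xs \<noteq> [] \<Longrightarrow> F xs = f (med_poly a b c d xs)"
begin

lemma singleton_if_med_poly_form: "F [x] = f (med a x b)"
  by (simp add: F_eq med_poly_singleton)

lemma preassociative_if_med_poly_form:
  assumes std: "standard F"
  shows "preassociative F"
  unfolding preassociative_def
proof (intro allI impI)
  fix x y y' z assume eq: "F y = F y'"
  show "F (x @ y @ z) = F (x @ y' @ z)"
  proof (cases "y = [] \<or> y' = []")
    case True
    then have "y = y'" using eq std unfolding standard_def by metis
    then show ?thesis by simp
  next
    case False
    then have "med_poly a b c d y = med_poly a b c d y'"
      using eq F_eq strict_mono_on_eq[OF f_mono med_poly_mem[OF ab] med_poly_mem[OF ab]] by simp
    then have "med_poly a b c d (x @ y @ z) = med_poly a b c d (x @ y' @ z)"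
      using False by (cases "x = []"; cases "z = []") (simp_all add: med_poly_append[OF _ _ cd])
    then show ?thesis using F_eq False by simp
  qed
qed

lemma unarily_quasi_range_idempotent_if_med_poly_form: "unarily_quasi_range_idempotent F"
  unfolding unarily_quasi_range_idempotent_def
proof
  show "F ` {xs. xs \<noteq> []} \<subseteq> range (\<lambda>x. F [x])"
  proof
    fix v assume "v \<in> F ` {xs. xs \<noteq> []}"
    then obtain xs where "xs \<noteq> []" "v = F xs" by auto
    then have "v = F [med_poly a b c d xs]"
      using F_eq singleton_if_med_poly_form med_eq_self[OF med_poly_mem[OF ab]] by simp
    then show "v \<in> range (\<lambda>x. F [x])" by auto
  qed
qed auto

lemma replicate_if_med_poly_form: "n \<noteq> 0 \<Longrightarrow> F (replicate n x) = F [x]"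
  by (simp add: F_eq med_poly_replicate singleton_if_med_poly_form)

lemma mono_if_med_poly_form: "x \<le> x' \<Longrightarrow> F (ys @ [x] @ zs) \<le> F (ys @ [x'] @ zs)"
  using monoD[OF is_clamp_mono[OF is_clamp_med_poly_section[OF ab cd]]] F_eq
    strict_mono_on_leD[OF f_mono med_poly_mem[OF ab] med_poly_mem[OF ab]] by simp

lemma convex_section_if_med_poly_form:
  assumes conv: "convex_chain (f ` {a..b})"
  shows "convex_chain {F (ys @ [x] @ zs) | x. True}"
proof -
  let ?g = "\<lambda>x. med_poly a b c d (ys @ [x] @ zs)"
  have "range ?g \<subseteq> {a..b}" using med_poly_mem[OF ab] by auto
  then have "convex_chain (f ` range ?g)"
    using convex_chain_image_strict_mono_on[OF f_mono conv]
      convex_chain_range_is_clamp[OF is_clamp_med_poly_section[OF ab cd]] by blast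
  moreover have "{F (ys @ [x] @ zs) | x. True} = f ` range ?g" using F_eq by auto
  ultimately show ?thesis by simp
qed

end

lemma binary_conditions_if_nary_conditions:
  fixes F :: "'a::linorder list \<Rightarrow> 'b::linorder"
  assumes rep: "\<forall>n::nat. n \<ge> 2 \<longrightarrow> (\<forall>x. F (replicate n x) = F [x])"
    and mono: "\<forall>n::nat. n \<ge> 2 \<longrightarrow> (\<forall>ys zs x x'.
            length ys + 1 + length zs = n \<and> x \<le> x' \<longrightarrow> F (ys @ [x] @ zs) \<le> F (ys @ [x'] @ zs))"
    and conv: "\<forall>n::nat. n \<ge> 2 \<longrightarrow> (\<forall>ys zs.
            length ys + 1 + length zs = n \<longrightarrow> convex_chain {F (ys @ [x] @ zs) | x. True})"
  shows "(\<forall>x. F [x, x] = F [x])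
      \<and> (\<forall>x x' y. x \<le> x' \<longrightarrow> F [x, y] \<le> F [x', y])
      \<and> (\<forall>x y y'. y \<le> y' \<longrightarrow> F [x, y] \<le> F [x, y'])
      \<and> (\<forall>z. convex_chain {F [x, z] | x. True} \<and> convex_chain {F [z, x] | x. True})"
  using rep[rule_format, of 2] mono[rule_format, of 2 "[]"] mono[rule_format, of 2 "[_]" "[]"]
    conv[rule_format, of 2 "[]"] conv[rule_format, of 2 "[_]" "[]"]
  by (simp add: numeral_2_eq_2)

theorem theorem5p8:
  fixes F :: "'a::linorder list \<Rightarrow> 'b::linorder" and a b :: 'a
  assumes Xbounded: "\<exists>m M. \<forall>x::'a. m \<le> x \<and> x \<le> M"
    and std: "standard F"
    and ab: "a \<le> b"
  shows
   "((preassociative F \<and> unarily_quasi_range_idempotent F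
      \<and> (\<exists>f::'a \<Rightarrow> 'b. strict_mono_on {a..b} f \<and> convex_chain (f ` {a..b})
            \<and> (\<forall>x. F [x] = f (med a x b)))
      \<and> (\<forall>x. F [x, x] = F [x])
      \<and> (\<forall>x x' y. x \<le> x' \<longrightarrow> F [x, y] \<le> F [x', y])
      \<and> (\<forall>x y y'. y \<le> y' \<longrightarrow> F [x, y] \<le> F [x, y'])
      \<and> (\<forall>z. convex_chain {F [x, z] | x. True} \<and> convex_chain {F [z, x] | x. True}))
    \<longleftrightarrow>
     (preassociative F \<and> unarily_quasi_range_idempotent F
      \<and> (\<exists>f::'a \<Rightarrow> 'b. strict_mono_on {a..b} f \<and> convex_chain (f ` {a..b})
            \<and> (\<forall>x. F [x] = f (med a x b)))
      \<and> (\<forall>n::nat. n \<ge> 2 \<longrightarrow> (\<forall>x. F (replicate n x) = F [x]))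
      \<and> (\<forall>n::nat. n \<ge> 2 \<longrightarrow> (\<forall>ys zs x x'.
            length ys + 1 + length zs = n \<and> x \<le> x' \<longrightarrow> F (ys @ [x] @ zs) \<le> F (ys @ [x'] @ zs)))
      \<and> (\<forall>n::nat. n \<ge> 2 \<longrightarrow> (\<forall>ys zs.
            length ys + 1 + length zs = n \<longrightarrow> convex_chain {F (ys @ [x] @ zs) | x. True}))))
   \<and>
    ((preassociative F \<and> unarily_quasi_range_idempotent F
      \<and> (\<exists>f::'a \<Rightarrow> 'b. strict_mono_on {a..b} f \<and> convex_chain (f ` {a..b})
            \<and> (\<forall>x. F [x] = f (med a x b)))
      \<and> (\<forall>n::nat. n \<ge> 2 \<longrightarrow> (\<forall>x. F (replicate n x) = F [x]))
      \<and> (\<forall>n::nat. n \<ge> 2 \<longrightarrow> (\<forall>ys zs x x'.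
            length ys + 1 + length zs = n \<and> x \<le> x' \<longrightarrow> F (ys @ [x] @ zs) \<le> F (ys @ [x'] @ zs)))
      \<and> (\<forall>n::nat. n \<ge> 2 \<longrightarrow> (\<forall>ys zs.
            length ys + 1 + length zs = n \<longrightarrow> convex_chain {F (ys @ [x] @ zs) | x. True})))
    \<longleftrightarrow>
     (\<exists>c\<in>{a..b}. \<exists>d\<in>{a..b}. \<exists>f::'a \<Rightarrow> 'b.
        strict_mono_on {a..b} f \<and> convex_chain (f ` {a..b})
        \<and> (\<forall>xs. xs \<noteq> [] \<longrightarrow>
              F xs = f (med a (max (max (min c (hd xs))
                                         (med (Min (set xs)) (min c d) (Max (set xs))))
                                    (min d (last xs))) b))))
   \<and>
    (\<forall>c\<in>{a..b}. \<forall>d\<in>{a..b}. \<forall>f::'a \<Rightarrow> 'b.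
        strict_mono_on {a..b} f \<and> convex_chain (f ` {a..b})
        \<and> (\<forall>xs. xs \<noteq> [] \<longrightarrow>
              F xs = f (med a (max (max (min c (hd xs))
                                         (med (Min (set xs)) (min c d) (Max (set xs))))
                                    (min d (last xs))) b))
        \<longrightarrow> (\<forall>x\<in>{a..b}. f x = F [x]))"
  (is "(?i \<longleftrightarrow> ?ii) \<and> (?ii \<longleftrightarrow> ?iii) \<and> ?f_eq")
proof -
  have iii_if_i: ?iii if ?i
  proof -
    from that obtain f where f: "strict_mono_on {a..b} f" "convex_chain (f ` {a..b})"
      and F1: "\<forall>x. F [x] = f (med a x b)" by blast
    from that obtain c d where "c \<in> {a..b}" "d \<in> {a..b}"
      and "\<forall>xs. xs \<noteq> [] \<longrightarrow> F xs = f (med_poly a b c d xs)"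
      using med_poly_form_if_binary_conditions[OF ab _ _ f(1) F1] by blast
    with f show ?iii unfolding med_poly_def by blast
  qed
  have ii_if_iii: ?ii if ?iii
  proof -
    from that obtain c d f where cd: "c \<in> {a..b}" "d \<in> {a..b}"
      and f: "strict_mono_on {a..b} f" "convex_chain (f ` {a..b})"
      and F_eq: "\<And>xs. xs \<noteq> [] \<Longrightarrow> F xs = f (med_poly a b c d xs)"
      unfolding med_poly_def by blast
    note form = ab cd f(1) F_eq
    show ?ii
      using preassociative_if_med_poly_form[OF form std]
        unarily_quasi_range_idempotent_if_med_poly_form[OF form]
        singleton_if_med_poly_form[OF form] f replicate_if_med_poly_form[OF form]
        mono_if_med_poly_form[OF form] convex_section_if_med_poly_form[OF form f(2)]
      by auto
  qed
  have i_if_ii: ?i if ?ii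
    by (insert that, elim conjE, drule (2) binary_conditions_if_nary_conditions, elim conjE,
        intro conjI, assumption+)
  have f_eq: ?f_eq
    unfolding med_poly_def[symmetric] by (auto simp: med_poly_singleton med_eq_self)
  show ?thesis
  proof (rule conjI[OF iffI conjI[OF iffI f_eq]])
    show ?ii if ?i using that by (intro ii_if_iii iii_if_i)
    show ?i if ?ii using that by (rule i_if_ii)
    show ?iii if ?ii using that by (intro iii_if_i i_if_ii)
    show ?ii if ?iii using that by (rule ii_if_iii)
  qed
qed

end
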